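(* Let $\delta_0>0$. For each fixed positive integer $t$ there is a constant $C_t$ (depending only on $t$, not on $\delta$ or $k$) such that the following holds for all integers $k\ge t+1$ and all $\delta\in[\delta_0,1)$ with $\delta k+k-1$ an odd integer. Let $P(x)=\operatorname{sign}(\delta k x_1+x_2+\cdots+x_k)$, $u=\frac{1+\delta}{2}k$, $v=\frac{1-\delta}{2}k$ (these are positive integers). Then \[\hat P_{\{1\}}=1-\frac{1}{2^{k-2}}\sum_{l=0}^{v-1}\binom{k-1}{l};\] if $t$ is odd and $I\subseteq\{2,\dots,k\}$ with $|I|=t$, then \[\hat P_I=\frac{1}{2^{k-2}}\cdot\frac{(k-t-1)!}{(u-1)!(v-1)!}\Big(\delta^{t-1}k^{t-1}-\frac{(t-1)(t-2)}{2}\delta^{t-3}k^{t-2}+R\Big);\] and if $t$ is even and $I=\{1\}\cup J$ with $J\subseteq\{2,\dots,k\}$, $|J|=t$, then \[\hat P_I=-\frac{1}{2^{k-2}}\cdot\frac{(k-t-1)!}{(u-1)!(v-1)!}\Big(\delta^{t-1}k^{t-1}-\frac{(t-1)(t-2)}{2}\delta^{t-3}k^{t-2}+R\Big);\] where in both cases $|R|\le C_t k^{t-3}$.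
   Context: For $P:\{-1,1\}^k\to\{-1,1\}$ and $I\subseteq[k]$, $\hat P_I=\mathbb{E}_{x\in\{-1,1\}^k}[P(x)\prod_{i\in I}x_i]$ with $x$ uniform. *)

theory Defs
  imports Complex_Main "HOL-Library.FuncSet"
begin

definition cube :: "nat \<Rightarrow> (nat \<Rightarrow> real) set" where
  "cube k = PiE {1..k} (\<lambda>_. {-1, 1})"

definition fourier_coeff :: "nat \<Rightarrow> ((nat \<Rightarrow> real) \<Rightarrow> real) \<Rightarrow> nat set \<Rightarrow> real" where
  "fourier_coeff k P I = (\<Sum>x\<in>cube k. P x * (\<Prod>i\<in>I. x i)) / 2 ^ k"

definition wmaj :: "nat \<Rightarrow> real \<Rightarrow> (nat \<Rightarrow> real) \<Rightarrow> real" where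
  "wmaj k \<delta> x = sgn (\<delta> * real k * x 1 + (\<Sum>i\<in>{2..k}. x i))"

end

theory Submission
  imports Defs
begin

text \<open>Group the points of the cube by the sign of \<open>x 1\<close> and by the numbers \<open>p\<close>, \<open>q\<close> of
  coordinates equal to \<open>1\<close> in \<open>I\<close> and in the remaining \<open>N = k - t - 1\<close> coordinates of
  \<open>{2..k}\<close>. The alternating sum over \<open>p\<close> is a \<open>t\<close>-fold finite difference of \<open>sgn\<close> along
  odd integers; one difference step leaves only the jump of \<open>sgn\<close> at \<open>0\<close>, so the sum over \<open>q\<close>
  collapses to a single binomial coefficient. In falling factorials this gives the coefficient
  exactly, as \<open>N! / ((u - 1)! (v - 1)!)\<close> times a symmetrised alternating convolution of falling
  factorials of \<open>a = u - 1\<close> and \<open>b = v - 1\<close> of total degree \<open>n = t - 1\<close>. Keeping the two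
  leading terms \<open>x^j - (j choose 2) x^(j-1)\<close> of each falling factorial, the binomial theorem
  turns the convolution into \<open>(a - b)^n - (n choose 2) (a + b) (a - b)^(n-2)\<close> up to
  \<open>O(k^(n-2))\<close>, uniformly for \<open>a, b \<in> [0, k]\<close>; it remains to insert \<open>a - b = \<delta> k\<close> and
  \<open>a + b = k - 2\<close>.\<close>

section \<open>Sums over the cube\<close>

definition sign_vector :: "nat set \<Rightarrow> nat set \<Rightarrow> nat \<Rightarrow> real" where
  "sign_vector A T i = (if i \<in> A then if i \<in> T then 1 else -1 else undefined)"

lemma sum_cube_eq_sum_Pow:
  "(\<Sum>x\<in>cube k. F x) = (\<Sum>T\<in>Pow {1..k}. F (sign_vector {1..k} T))"
  unfolding cube_def
proof (rule sum.reindex_bij_witness[where j = "\<lambda>x. {i\<in>{1..k}. x i = 1}" and i = "sign_vector {1..k}"])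
  fix x assume x: "x \<in> PiE {1..k} (\<lambda>_. {-1::real, 1})"
  show "sign_vector {1..k} {i \<in> {1..k}. x i = 1} = x"
  proof
    fix i show "sign_vector {1..k} {i \<in> {1..k}. x i = 1} i = x i"
      using x by (force simp: sign_vector_def PiE_def extensional_def Pi_iff)
  qed
  then show "F (sign_vector {1..k} {i \<in> {1..k}. x i = 1}) = F x" by simp
qed (auto simp: sign_vector_def PiE_def extensional_def)

lemma sum_Pow_Un:
  assumes "A \<inter> B = {}"
  shows "(\<Sum>T\<in>Pow (A \<union> B). F T) = (\<Sum>T1\<in>Pow A. \<Sum>T2\<in>Pow B. F (T1 \<union> T2))"
proof -
  have "(\<Sum>T1\<in>Pow A. \<Sum>T2\<in>Pow B. F (T1 \<union> T2)) = (\<Sum>(T1, T2)\<in>Pow A \<times> Pow B. F (T1 \<union> T2))"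
    by (rule sum.cartesian_product)
  also have "\<dots> = (\<Sum>T\<in>Pow (A \<union> B). F T)"
    by (rule sum.reindex_bij_witness[where i = "\<lambda>T. (T \<inter> A, T \<inter> B)" and j = "\<lambda>(T1, T2). T1 \<union> T2"])
       (use assms in auto)
  finally show ?thesis by simp
qed

lemma sum_Pow_card:
  assumes "finite A"
  shows "(\<Sum>T\<in>Pow A. g (card T)) = (\<Sum>m=0..card A. of_nat (card A choose m) * g m)"
proof -
  have "(\<Sum>T\<in>Pow A. g (card T)) = (\<Sum>m=0..card A. \<Sum>T\<in>{T. T \<in> Pow A \<and> card T = m}. g (card T))"
    by (rule sum.group[symmetric]) (use assms in \<open>auto intro: card_mono\<close>)
  also have "\<dots> = (\<Sum>m=0..card A. of_nat (card A choose m) * g m)"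
  proof (rule sum.cong[OF refl])
    fix m
    have "(\<Sum>T\<in>{T. T \<in> Pow A \<and> card T = m}. g (card T)) = (\<Sum>T\<in>{T. T \<subseteq> A \<and> card T = m}. g m)"
      by (rule sum.cong) auto
    then show "(\<Sum>T\<in>{T. T \<in> Pow A \<and> card T = m}. g (card T)) = of_nat (card A choose m) * g m"
      using n_subsets[OF assms, of m] by simp
  qed
  finally show ?thesis .
qed

lemma sum_Pow_Pow_card:
  assumes "finite A" "finite B"
  shows "(\<Sum>T1\<in>Pow A. \<Sum>T2\<in>Pow B. f (card T1) (card T2))
    = (\<Sum>p=0..card A. \<Sum>q=0..card B. real (card A choose p) * real (card B choose q) * f p q)"
proof -
  have "(\<Sum>T1\<in>Pow A. \<Sum>T2\<in>Pow B. f (card T1) (card T2))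
      = (\<Sum>T1\<in>Pow A. \<Sum>q=0..card B. real (card B choose q) * f (card T1) q)"
    by (rule sum.cong[OF refl]) (rule sum_Pow_card[OF assms(2), of "\<lambda>q. f _ q"])
  also have "\<dots> = (\<Sum>p=0..card A. real (card A choose p) * (\<Sum>q=0..card B. real (card B choose q) * f p q))"
    by (rule sum_Pow_card[OF assms(1), of "\<lambda>p. \<Sum>q=0..card B. real (card B choose q) * f p q"])
  finally show ?thesis by (simp add: sum_distrib_left mult.assoc)
qed

lemma sum_sign_vector:
  assumes "finite S" "S \<subseteq> A"
  shows "(\<Sum>i\<in>S. sign_vector A T i) = 2 * real (card (S \<inter> T)) - real (card S)"
proof -
  have "(\<Sum>i\<in>S. sign_vector A T i) = real (card (S \<inter> T)) - real (card (S - T))"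
    using assms by (simp add: sign_vector_def subset_iff sum.If_cases Int_def Diff_eq)
  moreover have "card S = card (S \<inter> T) + card (S - T)"
    using assms by (metis card_Int_Diff)
  ultimately show ?thesis by simp
qed

lemma prod_sign_vector:
  assumes "finite S" "S \<subseteq> A"
  shows "(\<Prod>i\<in>S. sign_vector A T i) = (-1) ^ (card S - card (S \<inter> T))"
proof -
  have "(\<Prod>i\<in>S. sign_vector A T i) = (-1) ^ card (S - T)"
    using assms by (simp add: sign_vector_def subset_iff prod.If_cases Int_def Diff_eq)
  moreover have "card S = card (S \<inter> T) + card (S - T)"
    using assms by (metis card_Int_Diff)
  ultimately show ?thesis by simp
qed

lemma sum_cube_by_counts:
  fixes H :: "real \<Rightarrow> real \<Rightarrow> real \<Rightarrow> real"
  assumes k: "1 \<le> k" and I: "I \<subseteq> {2..k}"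
    and m: "card I = m" and N: "card ({2..k} - I) = N"
  shows "(\<Sum>x\<in>cube k. H (x 1) (\<Sum>i\<in>I. x i) (\<Sum>i\<in>{2..k} - I. x i) * (\<Prod>i\<in>I. x i)) =
    (\<Sum>p=0..m. \<Sum>q=0..N. real (m choose p) * real (N choose q) * (-1) ^ (m - p) *
       (H 1 (2 * real p - real m) (2 * real q - real N) + H (-1) (2 * real p - real m) (2 * real q - real N)))"
proof -
  define R where "R = {2..k} - I"
  have fI: "finite I" and fR: "finite R" and IR: "I \<inter> R = {}"
    using I finite_subset unfolding R_def by auto
  have split: "{1..k} = {1} \<union> (I \<union> R)" using I k unfolding R_def by auto
  define \<Phi> where "\<Phi> e p q = H e (2 * real p - real m) (2 * real q - real N) * (-1) ^ (m - p)"
    for e :: real and p q :: nat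
  define G where "G x = H (x 1) (\<Sum>i\<in>I. x i) (\<Sum>i\<in>R. x i) * (\<Prod>i\<in>I. x i)" for x
  have G: "G (sign_vector {1..k} T) = \<Phi> (if 1 \<in> T then 1 else -1) (card (I \<inter> T)) (card (R \<inter> T))" for T
  proof -
    have IA: "I \<subseteq> {1..k}" and RA: "R \<subseteq> {1..k}" using split by auto
    have "sign_vector {1..k} T 1 = (if 1 \<in> T then 1 else -1)" using k by (simp add: sign_vector_def)
    then show ?thesis
      unfolding G_def \<Phi>_def sum_sign_vector[OF fI IA] sum_sign_vector[OF fR RA] prod_sign_vector[OF fI IA]
      using m N unfolding R_def by simp
  qed
  have "(\<Sum>x\<in>cube k. G x) = (\<Sum>T\<in>Pow ({1} \<union> (I \<union> R)). G (sign_vector {1..k} T))"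
    unfolding sum_cube_eq_sum_Pow split[symmetric] ..
  also have "\<dots> = (\<Sum>T1\<in>Pow {1}. \<Sum>T2\<in>Pow I. \<Sum>T3\<in>Pow R. G (sign_vector {1..k} (T1 \<union> (T2 \<union> T3))))"
  proof -
    have "{1} \<inter> (I \<union> R) = {}" using I unfolding R_def by auto
    then show ?thesis by (subst sum_Pow_Un) (simp_all add: sum_Pow_Un[OF IR])
  qed
  also have "\<dots> = (\<Sum>T1\<in>Pow {1::nat}. \<Sum>T2\<in>Pow I. \<Sum>T3\<in>Pow R. \<Phi> (if 1 \<in> T1 then 1 else -1) (card T2) (card T3))"
  proof (intro sum.cong refl)
    fix T1 T2 T3 :: "nat set" assume "T1 \<in> Pow {1}" "T2 \<in> Pow I" "T3 \<in> Pow R"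
    then have "I \<inter> (T1 \<union> (T2 \<union> T3)) = T2" "R \<inter> (T1 \<union> (T2 \<union> T3)) = T3" "(1 \<in> T1 \<union> (T2 \<union> T3)) = (1 \<in> T1)"
      using IR I unfolding R_def by auto
    then show "G (sign_vector {1..k} (T1 \<union> (T2 \<union> T3))) = \<Phi> (if 1 \<in> T1 then 1 else -1) (card T2) (card T3)"
      unfolding G by simp
  qed
  also have "\<dots> = (\<Sum>T1\<in>Pow {1::nat}. \<Sum>p=0..m. \<Sum>q=0..N.
      real (m choose p) * real (N choose q) * \<Phi> (if 1 \<in> T1 then 1 else -1) p q)"
    using sum_Pow_Pow_card[OF fI fR] m N unfolding R_def by simp
  also have "\<dots> = (\<Sum>p=0..m. \<Sum>q=0..N. real (m choose p) * real (N choose q) * (-1) ^ (m - p) *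
       (H 1 (2 * real p - real m) (2 * real q - real N) + H (-1) (2 * real p - real m) (2 * real q - real N)))"
  proof -
    have "Pow {1::nat} = {{}, {1}}" by blast
    then show ?thesis by (simp add: \<Phi>_def sum.distrib[symmetric] algebra_simps)
  qed
  finally show ?thesis unfolding G_def R_def .
qed

section \<open>Falling factorials\<close>

fun ffact :: "nat \<Rightarrow> real \<Rightarrow> real" where
  "ffact 0 x = 1"
| "ffact (Suc j) x = ffact j x * (x - real j)"

lemma ffact_of_nat: "ffact j (real m) = (if j \<le> m then fact m / fact (m - j) else 0)"
proof (induction j)
  case (Suc j)
  show ?case
  proof (cases "Suc j \<le> m")
    case True
    then have "m - j = Suc (m - Suc j)" by simp
    then have f: "fact (m - j) = real (m - j) * fact (m - Suc j)" by simp
    have "ffact (Suc j) (real m) = fact m / fact (m - j) * real (m - j)"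
      using Suc True by simp
    also have "\<dots> = fact m / fact (m - Suc j)"
      unfolding f using True by (simp add: field_simps)
    finally show ?thesis using True by simp
  qed (use Suc in auto)
qed simp

definition ffact_conv :: "nat \<Rightarrow> real \<Rightarrow> real \<Rightarrow> real" where
  "ffact_conv n a b = (\<Sum>p=0..n. real (n choose p) * (-1) ^ p * (ffact p b * ffact (n - p) a))"

lemma binomial_eq_ffact_product:
  assumes uv: "N + n + 2 = u + v" and "1 \<le> u" "1 \<le> v" "p \<le> n"
  shows "(if p < v then real (N choose (v - 1 - p)) else 0)
     = fact N / (fact (u - 1) * fact (v - 1)) * (ffact p (real (v - 1)) * ffact (n - p) (real (u - 1)))"
proof (cases "p < v")
  case pv: True
  show ?thesis
  proof (cases "n - p \<le> u - 1")
    case True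
    have "v - 1 - p \<le> N" and "N - (v - 1 - p) = u - 1 - (n - p)"
      using True pv assms by arith+
    then have "real (N choose (v - 1 - p)) = fact N / (fact (v - 1 - p) * fact (u - 1 - (n - p)))"
      by (metis binomial_fact)
    moreover have "p \<le> v - 1" using pv by simp
    then have "ffact p (real (v - 1)) = fact (v - 1) / fact (v - 1 - p)"
      by (simp add: ffact_of_nat)
    moreover have "ffact (n - p) (real (u - 1)) = fact (u - 1) / fact (u - 1 - (n - p))"
      using True by (simp add: ffact_of_nat)
    ultimately show ?thesis using pv by simp
  next
    case False
    then have "N < v - 1 - p" using pv assms by arith
    then show ?thesis using pv False by (simp add: ffact_of_nat binomial_eq_0)
  qed
next
  case False
  then have "ffact p (real (v - 1)) = 0" using assms by (subst ffact_of_nat) simp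
  then show ?thesis using False by simp
qed

section \<open>Alternating sums of the sign function\<close>

lemma sum_binomial_Suc_alternating:
  fixes f :: "nat \<Rightarrow> real"
  shows "(\<Sum>p=0..Suc n. real (Suc n choose p) * (-1) ^ p * f p)
    = - (\<Sum>p=0..n. real (n choose p) * (-1) ^ p * (f (Suc p) - f p))"
proof -
  let ?S = "\<lambda>g. \<Sum>p=0..n. real (n choose p) * (-1) ^ p * g p"
  have shift: "(\<Sum>p=0..n. real (n choose Suc p) * (-1) ^ p * f (Suc p)) = f 0 - ?S f"
  proof -
    have "(\<Sum>p=0..Suc n. real (n choose p) * (-1) ^ p * f p)
        = f 0 + (\<Sum>p=0..n. real (n choose Suc p) * (-1) ^ Suc p * f (Suc p))"
      by (subst sum.atLeast0_atMost_Suc_shift) simp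
    moreover have "(\<Sum>p=0..Suc n. real (n choose p) * (-1) ^ p * f p) = ?S f"
      by (simp add: sum.atLeast0_atMost_Suc)
    ultimately show ?thesis by (simp add: sum_negf)
  qed
  have "(\<Sum>p=0..Suc n. real (Suc n choose p) * (-1) ^ p * f p)
      = f 0 + (\<Sum>p=0..n. real (Suc n choose Suc p) * (-1) ^ Suc p * f (Suc p))"
    by (subst sum.atLeast0_atMost_Suc_shift) simp
  also have "\<dots> = f 0 - ?S (\<lambda>p. f (Suc p)) - (\<Sum>p=0..n. real (n choose Suc p) * (-1) ^ p * f (Suc p))"
    by (simp add: algebra_simps sum.distrib sum_negf sum_subtractf)
  also have "\<dots> = - ?S (\<lambda>p. f (Suc p) - f p)"
  proof -
    have "?S (\<lambda>p. f (Suc p) - f p) = ?S (\<lambda>p. f (Suc p)) - ?S f"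
      by (simp add: sum_subtractf right_diff_distrib)
    then show ?thesis using shift by linarith
  qed
  finally show ?thesis .
qed

lemma sgn_odd_add_two:
  fixes x :: int
  assumes "odd x"
  shows "sgn (real_of_int x + 2) - sgn (real_of_int x) = (if x = -1 then 2 else 0)"
proof -
  have "x \<le> -3 \<or> x = -1 \<or> x \<ge> 1" using assms by presburger
  then show ?thesis by (auto simp: sgn_real_def)
qed

lemma sgn_odd_int: "sgn (2 * real_of_int z + 1) = (if 0 \<le> z then 1 else -1)"
  by (auto simp: sgn_real_def)

lemma alternating_sum_sgn:
  fixes w :: int
  assumes "odd (w + int (Suc n))"
  shows "(\<Sum>p=0..Suc n. real (Suc n choose p) * (-1) ^ p * sgn (real_of_int w + (2 * real p - real (Suc n))))
    = - (\<Sum>p=0..n. real (n choose p) * (-1) ^ p * (if w + 2 * int p - int (Suc n) = -1 then 2 else 0))"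
proof -
  define f where "f p = sgn (real_of_int w + (2 * real p - real (Suc n)))" for p :: nat
  have "f (Suc p) - f p = (if w + 2 * int p - int (Suc n) = -1 then 2 else 0)" for p
  proof -
    have "odd (w + 2 * int p - int (Suc n))" using assms by presburger
    moreover have "f p = sgn (real_of_int (w + 2 * int p - int (Suc n)))"
      and "f (Suc p) = sgn (real_of_int (w + 2 * int p - int (Suc n)) + 2)"
      unfolding f_def by (simp_all add: algebra_simps)
    ultimately show ?thesis using sgn_odd_add_two[of "w + 2 * int p - int (Suc n)"] by simp
  qed
  then show ?thesis using sum_binomial_Suc_alternating[of n f] unfolding f_def by simp
qed

lemma alternating_double_sum_sgn:
  fixes c :: int
  assumes "odd (c + int (Suc n) + int N)"
  shows "(\<Sum>p=0..Suc n. \<Sum>q=0..N. real (Suc n choose p) * real (N choose q) * (-1) ^ (Suc n - p) *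
           sgn (real_of_int c + (2 * real p - real (Suc n)) + (2 * real q - real N)))
       = 2 * (-1) ^ n * (\<Sum>p=0..n. real (n choose p) * (-1) ^ p *
           (\<Sum>q=0..N. real (N choose q) * (if c + 2 * int p - int (Suc n) + 2 * int q - int N = -1 then 1 else 0)))"
proof -
  have sign: "(-1::real) ^ (Suc n - p) = (-1) ^ Suc n * (-1) ^ p" if "p \<le> Suc n" for p
  proof -
    define m where "m = Suc n - p"
    have "Suc n = p + m" using that unfolding m_def by simp
    then have "(-1::real) ^ Suc n * (-1) ^ p = (-1) ^ m * ((-1) ^ p * (-1) ^ p)"
      by (simp add: power_add algebra_simps)
    also have "(-1::real) ^ p * (-1) ^ p = 1" by (simp flip: power_add)
    finally show ?thesis unfolding m_def by simp
  qed
  have "(\<Sum>p=0..Suc n. \<Sum>q=0..N. real (Suc n choose p) * real (N choose q) * (-1) ^ (Suc n - p) *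
           sgn (real_of_int c + (2 * real p - real (Suc n)) + (2 * real q - real N)))
     = (-1) ^ Suc n * (\<Sum>q=0..N. real (N choose q) * (\<Sum>p=0..Suc n. real (Suc n choose p) * (-1) ^ p *
           sgn (real_of_int (c + 2 * int q - int N) + (2 * real p - real (Suc n)))))"
    by (subst sum.swap, simp only: sum_distrib_left, intro sum.cong refl) (simp add: sign algebra_simps)
  also have "\<dots> = (-1) ^ Suc n * (\<Sum>q=0..N. real (N choose q) * (- (\<Sum>p=0..n. real (n choose p) * (-1) ^ p *
           (if (c + 2 * int q - int N) + 2 * int p - int (Suc n) = -1 then 2 else 0))))"
  proof -
    have "odd ((c + 2 * int q - int N) + int (Suc n))" for q using assms by presburger
    note alternating_sum_sgn[OF this]
    then show ?thesis by (simp only:)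
  qed
  also have "\<dots> = 2 * (-1) ^ n * (\<Sum>p=0..n. real (n choose p) * (-1) ^ p *
           (\<Sum>q=0..N. real (N choose q) * (if c + 2 * int p - int (Suc n) + 2 * int q - int N = -1 then 1 else 0)))"
    by (simp only: sum_negf[symmetric] sum_distrib_left, subst sum.swap, intro sum.cong refl)
      (auto simp: algebra_simps)
  finally show ?thesis .
qed

lemma alternating_double_sum_sgn_ffact:
  assumes uv: "N + n + 2 = u + v" and u: "1 \<le> u" and v: "1 \<le> v"
  shows "(\<Sum>p=0..Suc n. \<Sum>q=0..N. real (Suc n choose p) * real (N choose q) * (-1) ^ (Suc n - p) *
           sgn ((real u - real v) + (2 * real p - real (Suc n)) + (2 * real q - real N)))
       = 2 * (-1) ^ n * (fact N / (fact (u - 1) * fact (v - 1))) * ffact_conv n (real (u - 1)) (real (v - 1))"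
proof -
  define c where "c = int u - int v"
  have "odd (c + int (Suc n) + int N)" unfolding c_def using uv by presburger
  note double = alternating_double_sum_sgn[OF this]
  have count: "(\<Sum>q=0..N. real (N choose q) * (if c + 2 * int p - int (Suc n) + 2 * int q - int N = -1 then 1 else 0))
      = (if p < v then real (N choose (v - 1 - p)) else 0)" for p
  proof -
    have "(\<Sum>q=0..N. real (N choose q) * (if c + 2 * int p - int (Suc n) + 2 * int q - int N = -1 then 1 else 0))
        = (\<Sum>q\<in>{0..N}. if q = v - 1 - p \<and> p < v then real (N choose q) else 0)"
      using uv unfolding c_def by (intro sum.cong) auto
    also have "\<dots> = (if p < v then real (N choose (v - 1 - p)) else 0)"
      by (cases "p < v") (auto simp: binomial_eq_0)
    finally show ?thesis .
  qed
  have "real_of_int c = real u - real v" unfolding c_def by simp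
  then have "(\<Sum>p=0..Suc n. \<Sum>q=0..N. real (Suc n choose p) * real (N choose q) * (-1) ^ (Suc n - p) *
           sgn ((real u - real v) + (2 * real p - real (Suc n)) + (2 * real q - real N)))
      = 2 * (-1) ^ n * (\<Sum>p=0..n. real (n choose p) * (-1) ^ p * (if p < v then real (N choose (v - 1 - p)) else 0))"
    using double unfolding count by simp
  also have "(\<Sum>p=0..n. real (n choose p) * (-1) ^ p * (if p < v then real (N choose (v - 1 - p)) else 0))
     = (fact N / (fact (u - 1) * fact (v - 1))) * ffact_conv n (real (u - 1)) (real (v - 1))"
    unfolding ffact_conv_def sum_distrib_left
    by (rule sum.cong[OF refl]) (simp add: binomial_eq_ffact_product[OF uv u v] mult_ac)
  finally show ?thesis by simp
qed

section \<open>Functions of polynomial growth\<close>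

text \<open>\<open>f a b = O(K^d)\<close> uniformly on the boxes \<open>\<bar>a\<bar>, \<bar>b\<bar> \<le> K\<close>; the degree is an integer so that error
  terms of negative order, as for \<open>t \<le> 2\<close>, need no separate treatment.\<close>
definition poly_bounded :: "int \<Rightarrow> (real \<Rightarrow> real \<Rightarrow> real) \<Rightarrow> bool" where
  "poly_bounded d f \<longleftrightarrow> (\<exists>c. \<forall>K a b. 1 \<le> K \<longrightarrow> \<bar>a\<bar> \<le> K \<longrightarrow> \<bar>b\<bar> \<le> K \<longrightarrow> \<bar>f a b\<bar> \<le> c * K powi d)"

lemma poly_boundedI:
  "(\<And>K a b. 1 \<le> K \<Longrightarrow> \<bar>a\<bar> \<le> K \<Longrightarrow> \<bar>b\<bar> \<le> K \<Longrightarrow> \<bar>f a b\<bar> \<le> c * K powi d) \<Longrightarrow> poly_bounded d f"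
  unfolding poly_bounded_def by blast

lemma poly_bound_nonneg:
  fixes f :: "real \<Rightarrow> real \<Rightarrow> real"
  assumes "\<And>K a b. 1 \<le> K \<Longrightarrow> \<bar>a\<bar> \<le> K \<Longrightarrow> \<bar>b\<bar> \<le> K \<Longrightarrow> \<bar>f a b\<bar> \<le> c * K powi d"
  shows "0 \<le> c"
proof -
  have "\<bar>f 0 0\<bar> \<le> c * 1 powi d" by (rule assms) simp_all
  then show ?thesis using abs_ge_zero[of "f 0 0"] by simp
qed

lemma poly_bounded_zero: "poly_bounded d (\<lambda>_ _. 0)"
  by (rule poly_boundedI[of _ 0]) simp

lemma poly_bounded_const: "poly_bounded 0 (\<lambda>_ _. r)"
  by (rule poly_boundedI[of _ "\<bar>r\<bar>"]) simp

lemma poly_bounded_power: "poly_bounded (int j) (\<lambda>a _. a ^ j)"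
  by (rule poly_boundedI[of _ 1]) (simp add: power_abs power_mono)

lemma poly_bounded_swap: "poly_bounded d f \<Longrightarrow> poly_bounded d (\<lambda>a b. f b a)"
  unfolding poly_bounded_def by blast

lemma poly_bounded_mono:
  assumes "d \<le> e" "poly_bounded d f"
  shows "poly_bounded e f"
proof -
  obtain c where c: "\<And>K a b. 1 \<le> K \<Longrightarrow> \<bar>a\<bar> \<le> K \<Longrightarrow> \<bar>b\<bar> \<le> K \<Longrightarrow> \<bar>f a b\<bar> \<le> c * K powi d"
    using assms(2) unfolding poly_bounded_def by blast
  have "0 \<le> c" using c by (rule poly_bound_nonneg)
  show ?thesis
  proof (rule poly_boundedI[of _ c])
    fix K a b :: real assume K: "1 \<le> K" "\<bar>a\<bar> \<le> K" "\<bar>b\<bar> \<le> K"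
    have "\<bar>f a b\<bar> \<le> c * K powi d" using c[OF K] .
    also have "\<dots> \<le> c * K powi e"
      using power_int_increasing[OF assms(1) K(1)] \<open>0 \<le> c\<close> by (rule mult_left_mono)
    finally show "\<bar>f a b\<bar> \<le> c * K powi e" .
  qed
qed

lemma poly_bounded_add:
  assumes "poly_bounded d f" "poly_bounded d g"
  shows "poly_bounded d (\<lambda>a b. f a b + g a b)"
proof -
  obtain c where c: "\<And>K a b. 1 \<le> K \<Longrightarrow> \<bar>a\<bar> \<le> K \<Longrightarrow> \<bar>b\<bar> \<le> K \<Longrightarrow> \<bar>f a b\<bar> \<le> c * K powi d"
    using assms(1) unfolding poly_bounded_def by blast
  obtain c' where c': "\<And>K a b. 1 \<le> K \<Longrightarrow> \<bar>a\<bar> \<le> K \<Longrightarrow> \<bar>b\<bar> \<le> K \<Longrightarrow> \<bar>g a b\<bar> \<le> c' * K powi d"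
    using assms(2) unfolding poly_bounded_def by blast
  show ?thesis
  proof (rule poly_boundedI[of _ "c + c'"])
    fix K a b :: real assume K: "1 \<le> K" "\<bar>a\<bar> \<le> K" "\<bar>b\<bar> \<le> K"
    have "\<bar>f a b + g a b\<bar> \<le> \<bar>f a b\<bar> + \<bar>g a b\<bar>" by (rule abs_triangle_ineq)
    also have "\<dots> \<le> (c + c') * K powi d" using add_mono[OF c[OF K] c'[OF K]] by (simp add: distrib_right)
    finally show "\<bar>f a b + g a b\<bar> \<le> (c + c') * K powi d" .
  qed
qed

lemma poly_bounded_cmult:
  assumes "poly_bounded d f"
  shows "poly_bounded d (\<lambda>a b. r * f a b)"
proof -
  obtain c where c: "\<And>K a b. 1 \<le> K \<Longrightarrow> \<bar>a\<bar> \<le> K \<Longrightarrow> \<bar>b\<bar> \<le> K \<Longrightarrow> \<bar>f a b\<bar> \<le> c * K powi d"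
    using assms unfolding poly_bounded_def by blast
  show ?thesis
    by (rule poly_boundedI[of _ "\<bar>r\<bar> * c"]) (simp add: abs_mult mult.assoc c mult_left_mono)
qed

lemma poly_bounded_diff:
  assumes "poly_bounded d f" "poly_bounded d g"
  shows "poly_bounded d (\<lambda>a b. f a b - g a b)"
  using poly_bounded_add[OF assms(1) poly_bounded_cmult[OF assms(2), of "-1"]] by simp

lemma poly_bounded_mult:
  assumes "poly_bounded d f" "poly_bounded e g"
  shows "poly_bounded (d + e) (\<lambda>a b. f a b * g a b)"
proof -
  obtain c where c: "\<And>K a b. 1 \<le> K \<Longrightarrow> \<bar>a\<bar> \<le> K \<Longrightarrow> \<bar>b\<bar> \<le> K \<Longrightarrow> \<bar>f a b\<bar> \<le> c * K powi d"
    using assms(1) unfolding poly_bounded_def by blast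
  have "0 \<le> c" using c by (rule poly_bound_nonneg)
  obtain c' where c': "\<And>K a b. 1 \<le> K \<Longrightarrow> \<bar>a\<bar> \<le> K \<Longrightarrow> \<bar>b\<bar> \<le> K \<Longrightarrow> \<bar>g a b\<bar> \<le> c' * K powi e"
    using assms(2) unfolding poly_bounded_def by blast
  show ?thesis
  proof (rule poly_boundedI[of _ "c * c'"])
    fix K a b :: real assume K: "1 \<le> K" "\<bar>a\<bar> \<le> K" "\<bar>b\<bar> \<le> K"
    have "\<bar>f a b * g a b\<bar> \<le> (c * K powi d) * (c' * K powi e)"
      unfolding abs_mult by (rule mult_mono) (use c[OF K] c'[OF K] \<open>0 \<le> c\<close> K in auto)
    also have "\<dots> = c * c' * K powi (d + e)"
      using K by (simp add: power_int_add)
    finally show "\<bar>f a b * g a b\<bar> \<le> c * c' * K powi (d + e)" .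
  qed
qed

lemma poly_bounded_sum:
  "(\<And>i. i \<in> A \<Longrightarrow> poly_bounded d (f i)) \<Longrightarrow> poly_bounded d (\<lambda>a b. \<Sum>i\<in>A. f i a b)"
  by (induction A rule: infinite_finite_induct) (auto intro: poly_bounded_zero poly_bounded_add)

section \<open>Expansion of the falling factorial convolution\<close>

lemma ffact_expansion:
  "poly_bounded (int j - 2) (\<lambda>a _. ffact j a - (a ^ j - real (j choose 2) * a ^ (j - 1)))"
proof (induction j)
  case 0
  then show ?case by (simp add: poly_bounded_zero binomial_eq_0)
next
  case (Suc j)
  define C where "C = real (j choose 2)"
  have eq: "ffact (Suc j) a - (a ^ Suc j - real (Suc j choose 2) * a ^ (Suc j - 1))
      = (ffact j a - (a ^ j - C * a ^ (j - 1))) * (a - real j) + real j * C * a ^ (j - 1)" for a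
  proof (cases j)
    case 0
    then show ?thesis unfolding C_def by (simp add: binomial_eq_0)
  next
    case (Suc i)
    have "real (Suc j choose 2) = C + real j" unfolding C_def by (simp add: numeral_2_eq_2)
    then show ?thesis using Suc by (simp add: algebra_simps)
  qed
  have linear: "poly_bounded 1 (\<lambda>a _. a - real j)"
    using poly_bounded_diff[OF poly_bounded_power[of 1] poly_bounded_mono[OF _ poly_bounded_const]]
    by simp
  have "poly_bounded (int (Suc j) - 2) (\<lambda>a _. (ffact j a - (a ^ j - C * a ^ (j - 1))) * (a - real j))"
    using poly_bounded_mult[OF Suc.IH[folded C_def] linear] by simp
  moreover have "poly_bounded (int (Suc j) - 2) (\<lambda>a _. real j * C * a ^ (j - 1))"
  proof (cases j)
    case (Suc i)
    have "poly_bounded (int i) (\<lambda>a _. real j * C * a ^ i)"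
      by (rule poly_bounded_cmult[OF poly_bounded_power])
    moreover have "int (Suc j) - 2 = int i" "j - 1 = i" using Suc by auto
    ultimately show ?thesis by (simp only:)
  qed (simp add: poly_bounded_zero)
  ultimately show ?case unfolding eq by (rule poly_bounded_add)
qed

lemma poly_bounded_ffact_leading_terms: "poly_bounded (int j) (\<lambda>a _. a ^ j - real (j choose 2) * a ^ (j - 1))"
  by (intro poly_bounded_diff poly_bounded_power poly_bounded_cmult poly_bounded_mono[OF _ poly_bounded_power])
    simp

definition ffact_product_main :: "nat \<Rightarrow> nat \<Rightarrow> real \<Rightarrow> real \<Rightarrow> real" where
  "ffact_product_main p q a b = b ^ p * a ^ q - real (p choose 2) * b ^ (p - 1) * a ^ q
      - real (q choose 2) * b ^ p * a ^ (q - 1)"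

lemma ffact_product_expansion:
  "poly_bounded (int (p + q) - 2) (\<lambda>a b. ffact p b * ffact q a - ffact_product_main p q a b)"
proof -
  define Cp where "Cp = real (p choose 2)"
  define Cq where "Cq = real (q choose 2)"
  define A where "A a = a ^ q - Cq * a ^ (q - 1)" for a
  define B where "B b = b ^ p - Cp * b ^ (p - 1)" for b
  define Ea where "Ea a = ffact q a - A a" for a
  define Eb where "Eb b = ffact p b - B b" for b
  have hA: "poly_bounded (int q) (\<lambda>a _. A a)"
    unfolding A_def Cq_def by (rule poly_bounded_ffact_leading_terms)
  have hB: "poly_bounded (int p) (\<lambda>_ b. B b)"
    unfolding B_def Cp_def by (rule poly_bounded_swap[OF poly_bounded_ffact_leading_terms])
  have hEa: "poly_bounded (int q - 2) (\<lambda>a _. Ea a)"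
    unfolding Ea_def A_def Cq_def by (rule ffact_expansion)
  have hEb: "poly_bounded (int p - 2) (\<lambda>_ b. Eb b)"
    unfolding Eb_def B_def Cp_def by (rule poly_bounded_swap[OF ffact_expansion])
  have cross: "poly_bounded (int (p + q) - 2) (\<lambda>a b. Cp * Cq * (b ^ (p - 1) * a ^ (q - 1)))"
  proof (cases "2 \<le> p \<and> 2 \<le> q")
    case True
    have monomial: "poly_bounded (int (p - 1) + int (q - 1)) (\<lambda>a b. b ^ (p - 1) * a ^ (q - 1))"
      by (rule poly_bounded_mult[OF poly_bounded_swap[OF poly_bounded_power] poly_bounded_power])
    show ?thesis
      by (intro poly_bounded_cmult poly_bounded_mono[OF _ monomial]) (use True in auto)
  next
    case False
    then have "Cp * Cq = 0" unfolding Cp_def Cq_def by (auto simp: binomial_eq_0)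
    then show ?thesis by (simp only: mult_zero_left poly_bounded_zero)
  qed
  have "ffact p b * ffact q a - ffact_product_main p q a b
      = Cp * Cq * (b ^ (p - 1) * a ^ (q - 1)) + B b * Ea a + Eb b * A a + Eb b * Ea a" for a b
    unfolding ffact_product_main_def Cp_def[symmetric] Cq_def[symmetric] Ea_def Eb_def A_def B_def
    by (simp add: algebra_simps)
  moreover have "poly_bounded (int (p + q) - 2)
      (\<lambda>a b. Cp * Cq * (b ^ (p - 1) * a ^ (q - 1)) + B b * Ea a + Eb b * A a + Eb b * Ea a)"
    by (intro poly_bounded_add cross poly_bounded_mono[OF _ poly_bounded_mult[OF hB hEa]]
        poly_bounded_mono[OF _ poly_bounded_mult[OF hEb hA]]
        poly_bounded_mono[OF _ poly_bounded_mult[OF hEb hEa]]) auto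
  ultimately show ?thesis by simp
qed

lemma sum_alternating_binomial_power:
  "(\<Sum>p=0..n. real (n choose p) * (-1) ^ p * (b ^ p * a ^ (n - p))) = (a - b) ^ n"
proof -
  have "(a - b) ^ n = (\<Sum>p\<le>n. real (n choose p) * (-b) ^ p * a ^ (n - p))"
    using binomial_ring[of "-b" a n] by simp
  then show ?thesis
    unfolding atLeast0AtMost by (simp add: power_minus[of b] mult.assoc)
qed

lemma choose_2_mult_choose_Suc_Suc:
  assumes "i \<le> m"
  shows "real (Suc (Suc m) choose Suc (Suc i)) * real (Suc (Suc i) choose 2)
    = real (Suc (Suc m) choose 2) * real (m choose i)"
proof -
  have "(Suc (Suc m) choose Suc (Suc i)) * (Suc (Suc i) choose 2)
      = (Suc (Suc m) choose 2) * ((Suc (Suc m) - 2) choose (Suc (Suc i) - 2))"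
    using assms by (intro choose_mult) auto
  then have "(Suc (Suc m) choose Suc (Suc i)) * (Suc (Suc i) choose 2) = (Suc (Suc m) choose 2) * (m choose i)"
    by simp
  then show ?thesis by (metis of_nat_mult)
qed

lemma choose_2_mult_choose:
  assumes "i \<le> m"
  shows "real (Suc (Suc m) choose i) * real ((Suc (Suc m) - i) choose 2)
    = real (Suc (Suc m) choose 2) * real (m choose i)"
proof -
  have "Suc (Suc m) choose i = Suc (Suc m) choose (Suc (Suc m) - i)"
    using assms by (intro binomial_symmetric) auto
  moreover have "(Suc (Suc m) choose (Suc (Suc m) - i)) * ((Suc (Suc m) - i) choose 2)
      = (Suc (Suc m) choose 2) * ((Suc (Suc m) - 2) choose (Suc (Suc m) - i - 2))"
    using assms by (intro choose_mult) auto
  moreover have "(Suc (Suc m) - 2) choose (Suc (Suc m) - i - 2) = m choose i"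
  proof -
    have "(Suc (Suc m) - 2) choose (Suc (Suc m) - i - 2) = m choose (m - i)" by simp
    also have "\<dots> = m choose i" using assms by (metis binomial_symmetric)
    finally show ?thesis .
  qed
  ultimately have "(Suc (Suc m) choose i) * ((Suc (Suc m) - i) choose 2) = (Suc (Suc m) choose 2) * (m choose i)"
    by simp
  then show ?thesis by (metis of_nat_mult)
qed

lemma alternating_sum_choose_2_lower:
  "(\<Sum>p=0..Suc (Suc m). real (Suc (Suc m) choose p) * (-1) ^ p * (real (p choose 2) * b ^ (p - 1) * a ^ (Suc (Suc m) - p)))
   = real (Suc (Suc m) choose 2) * b * (a - b) ^ m"
proof -
  define g where "g p = real (Suc (Suc m) choose p) * (-1) ^ p * (real (p choose 2) * b ^ (p - 1) * a ^ (Suc (Suc m) - p))" for p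
  have "(\<Sum>p=0..Suc (Suc m). g p) = g 0 + (g 1 + (\<Sum>p=0..m. g (Suc (Suc p))))"
    by (simp only: sum.atLeast0_atMost_Suc_shift One_nat_def o_def)
  also have "g 0 = 0" unfolding g_def by simp
  also have "g 1 = 0" unfolding g_def by simp
  also have "(\<Sum>p=0..m. g (Suc (Suc p))) = (\<Sum>p=0..m. real (Suc (Suc m) choose 2) * b * (real (m choose p) * (-1) ^ p * (b ^ p * a ^ (m - p))))"
  proof (rule sum.cong[OF refl])
    fix p assume "p \<in> {0..m}"
    then have pm: "p \<le> m" by simp
    have "g (Suc (Suc p)) = (real (Suc (Suc m) choose Suc (Suc p)) * real (Suc (Suc p) choose 2)) * ((-1) ^ p * (b * b ^ p) * a ^ (m - p))"
      unfolding g_def by (simp add: mult_ac)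
    then show "g (Suc (Suc p)) = real (Suc (Suc m) choose 2) * b * (real (m choose p) * (-1) ^ p * (b ^ p * a ^ (m - p)))"
      unfolding choose_2_mult_choose_Suc_Suc[OF pm] by (simp add: mult_ac)
  qed
  also have "(\<Sum>p=0..m. real (Suc (Suc m) choose 2) * b * (real (m choose p) * (-1) ^ p * (b ^ p * a ^ (m - p))))
      = real (Suc (Suc m) choose 2) * b * (a - b) ^ m"
    by (simp only: sum_distrib_left[symmetric] sum_alternating_binomial_power)
  finally show ?thesis unfolding g_def by simp
qed

lemma alternating_sum_choose_2_upper:
  "(\<Sum>p=0..Suc (Suc m). real (Suc (Suc m) choose p) * (-1) ^ p * (real ((Suc (Suc m) - p) choose 2) * b ^ p * a ^ (Suc (Suc m) - p - 1)))
   = real (Suc (Suc m) choose 2) * a * (a - b) ^ m"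
proof -
  define g where "g p = real (Suc (Suc m) choose p) * (-1) ^ p * (real ((Suc (Suc m) - p) choose 2) * b ^ p * a ^ (Suc (Suc m) - p - 1))" for p
  have "(\<Sum>p=0..Suc (Suc m). g p) = (\<Sum>p=0..m. g p) + g (Suc m) + g (Suc (Suc m))"
    by (simp only: sum.atLeast0_atMost_Suc)
  also have "g (Suc m) = 0" unfolding g_def by (simp add: Suc_diff_le binomial_eq_0)
  also have "g (Suc (Suc m)) = 0" unfolding g_def by simp
  also have "(\<Sum>p=0..m. g p) = (\<Sum>p=0..m. real (Suc (Suc m) choose 2) * a * (real (m choose p) * (-1) ^ p * (b ^ p * a ^ (m - p))))"
  proof (rule sum.cong[OF refl])
    fix p assume "p \<in> {0..m}"
    then have pm: "p \<le> m" by simp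
    have "Suc (Suc m) - p - 1 = Suc (m - p)" using pm by simp
    then have "g p = (real (Suc (Suc m) choose p) * real ((Suc (Suc m) - p) choose 2)) * ((-1) ^ p * b ^ p * (a * a ^ (m - p)))"
      unfolding g_def by (simp add: mult_ac)
    then show "g p = real (Suc (Suc m) choose 2) * a * (real (m choose p) * (-1) ^ p * (b ^ p * a ^ (m - p)))"
      unfolding choose_2_mult_choose[OF pm] by (simp add: mult_ac)
  qed
  also have "(\<Sum>p=0..m. real (Suc (Suc m) choose 2) * a * (real (m choose p) * (-1) ^ p * (b ^ p * a ^ (m - p))))
      = real (Suc (Suc m) choose 2) * a * (a - b) ^ m"
    by (simp only: sum_distrib_left[symmetric] sum_alternating_binomial_power)
  finally show ?thesis unfolding g_def by simp
qed

definition ffact_conv_main :: "nat \<Rightarrow> real \<Rightarrow> real \<Rightarrow> real" where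
  "ffact_conv_main n a b = (a - b) ^ n - real (n choose 2) * (a + b) * (a - b) ^ (n - 2)"

lemma sum_ffact_product_main:
  "(\<Sum>p=0..n. real (n choose p) * (-1) ^ p * ffact_product_main p (n - p) a b) = ffact_conv_main n a b"
proof -
  have split: "(\<Sum>p=0..n. real (n choose p) * (-1) ^ p * ffact_product_main p (n - p) a b) =
       (\<Sum>p=0..n. real (n choose p) * (-1) ^ p * (b ^ p * a ^ (n - p)))
     - (\<Sum>p=0..n. real (n choose p) * (-1) ^ p * (real (p choose 2) * b ^ (p - 1) * a ^ (n - p)))
     - (\<Sum>p=0..n. real (n choose p) * (-1) ^ p * (real ((n - p) choose 2) * b ^ p * a ^ (n - p - 1)))"
    unfolding ffact_product_main_def sum_subtractf[symmetric]
    by (rule sum.cong[OF refl]) (simp add: right_diff_distrib)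
  show ?thesis
  proof (cases "2 \<le> n")
    case True
    then obtain m where m: "n = Suc (Suc m)" by (metis add_2_eq_Suc le_Suc_ex)
    show ?thesis
      unfolding split sum_alternating_binomial_power ffact_conv_main_def
      unfolding m alternating_sum_choose_2_lower alternating_sum_choose_2_upper
      by (simp add: algebra_simps)
  next
    case False
    then have "(\<Sum>p=0..n. real (n choose p) * (-1) ^ p * (real (p choose 2) * b ^ (p - 1) * a ^ (n - p))) = 0"
      and "(\<Sum>p=0..n. real (n choose p) * (-1) ^ p * (real ((n - p) choose 2) * b ^ p * a ^ (n - p - 1))) = 0"
      by (auto intro!: sum.neutral simp: binomial_eq_0)
    moreover have "real (n choose 2) = 0" using False by (simp add: binomial_eq_0)
    ultimately show ?thesis unfolding split sum_alternating_binomial_power ffact_conv_main_def by simp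
  qed
qed

lemma ffact_conv_expansion:
  "poly_bounded (int n - 2) (\<lambda>a b. ffact_conv n a b - ffact_conv_main n a b)"
proof -
  have "ffact_conv n a b - ffact_conv_main n a b = (\<Sum>p=0..n. real (n choose p) * (-1) ^ p *
      (ffact p b * ffact (n - p) a - ffact_product_main p (n - p) a b))" for a b
    unfolding ffact_conv_def sum_ffact_product_main[symmetric]
    by (simp add: sum_subtractf right_diff_distrib)
  moreover have "poly_bounded (int n - 2) (\<lambda>a b. \<Sum>p=0..n. real (n choose p) * (-1) ^ p *
      (ffact p b * ffact (n - p) a - ffact_product_main p (n - p) a b))"
    by (intro poly_bounded_sum poly_bounded_cmult poly_bounded_mono[OF _ ffact_product_expansion]) auto
  ultimately show ?thesis by simp
qed

lemma ffact_conv_main_swap: "ffact_conv_main n b a = (-1) ^ n * ffact_conv_main n a b"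
proof -
  have swap: "(b - a) ^ j = (-1) ^ j * (a - b) ^ j" for j :: nat
    by (metis minus_diff_eq power_minus)
  show ?thesis
  proof (cases "2 \<le> n")
    case True
    then obtain m where "n = Suc (Suc m)" by (metis add_2_eq_Suc le_Suc_ex)
    then show ?thesis unfolding ffact_conv_main_def swap by (simp add: algebra_simps)
  next
    case False
    then show ?thesis unfolding ffact_conv_main_def swap by (simp add: binomial_eq_0)
  qed
qed

definition ffact_conv_sym :: "nat \<Rightarrow> real \<Rightarrow> real \<Rightarrow> real" where
  "ffact_conv_sym n a b = (ffact_conv n a b + (-1) ^ n * ffact_conv n b a) / 2"

lemma ffact_conv_sym_expansion:
  "poly_bounded (int n - 2) (\<lambda>a b. ffact_conv_sym n a b - ffact_conv_main n a b)"
proof -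
  have "ffact_conv_sym n a b - ffact_conv_main n a b
      = 1/2 * (ffact_conv n a b - ffact_conv_main n a b)
        + 1/2 * (-1) ^ n * (ffact_conv n b a - ffact_conv_main n b a)" for a b
  proof -
    have regroup: "(x + s * y) / 2 - s * M' = 1/2 * (x - s * M') + 1/2 * s * (y - M')" for x y s M' :: real
      by (simp add: field_simps)
    show ?thesis
      unfolding ffact_conv_sym_def ffact_conv_main_swap[of n a b] by (rule regroup)
  qed
  moreover have "poly_bounded (int n - 2) (\<lambda>a b. 1/2 * (ffact_conv n a b - ffact_conv_main n a b)
        + 1/2 * (-1) ^ n * (ffact_conv n b a - ffact_conv_main n b a))"
    by (intro poly_bounded_add poly_bounded_cmult ffact_conv_expansion
        poly_bounded_swap[OF ffact_conv_expansion])
  ultimately show ?thesis by simp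
qed

lemma real_choose_two: "real (n choose 2) = real n * (real n - 1) / 2"
  by (induction n) (simp_all add: numeral_2_eq_2 field_simps)

definition main_term :: "nat \<Rightarrow> real \<Rightarrow> real \<Rightarrow> real" where
  "main_term t \<delta> K = \<delta> ^ (t - 1) * K ^ (t - 1)
     - (real t - 1) * (real t - 2) / 2 * \<delta> powi (int t - 3) * K powi (int t - 2)"

lemma ffact_conv_main_approx:
  assumes ab: "a - b = \<delta> * K" "a + b = K - 2" and K: "1 \<le> K" and \<delta>: "\<bar>\<delta>\<bar> \<le> 1"
  shows "\<bar>ffact_conv_main n a b - main_term (Suc n) \<delta> K\<bar> \<le> 2 * real (n choose 2) * K powi (int n - 2)"
proof (cases "2 \<le> n")
  case True
  then obtain m where m: "n = Suc (Suc m)" by (metis add_2_eq_Suc le_Suc_ex)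
  have exponents: "int (Suc n) - 3 = int m" "int (Suc n) - 2 = int (Suc m)" "int n - 2 = int m"
    using m by auto
  have "ffact_conv_main n a b - main_term (Suc n) \<delta> K = 2 * real (n choose 2) * (\<delta> * K) ^ m"
  proof -
    have "(real (Suc n) - 1) * (real (Suc n) - 2) / 2 = real (n choose 2)"
      unfolding real_choose_two m by (simp add: algebra_simps)
    then show ?thesis
      unfolding ffact_conv_main_def main_term_def ab exponents power_int_of_nat
      unfolding m by (simp add: algebra_simps)
  qed
  moreover have "\<bar>(\<delta> * K) ^ m\<bar> \<le> K ^ m"
    using \<delta> K by (simp add: abs_mult power_abs power_mono mult_left_le_one_le)
  ultimately show ?thesis
    unfolding exponents power_int_of_nat by (simp add: abs_mult mult_left_mono)
next
  case False
  then have "n = 0 \<or> n = 1" by auto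
  then show ?thesis
    unfolding ffact_conv_main_def main_term_def ab by (auto simp: binomial_eq_0)
qed

lemma ffact_conv_sym_remainder:
  obtains C where "\<And>K \<delta> a b. 1 \<le> K \<Longrightarrow> \<bar>\<delta>\<bar> \<le> 1 \<Longrightarrow> \<bar>a\<bar> \<le> K \<Longrightarrow> \<bar>b\<bar> \<le> K \<Longrightarrow>
    a - b = \<delta> * K \<Longrightarrow> a + b = K - 2 \<Longrightarrow>
    \<bar>ffact_conv_sym n a b - main_term (Suc n) \<delta> K\<bar> \<le> C * K powi (int n - 2)"
proof -
  obtain c where c: "\<And>K a b. 1 \<le> K \<Longrightarrow> \<bar>a\<bar> \<le> K \<Longrightarrow> \<bar>b\<bar> \<le> K \<Longrightarrow>
      \<bar>ffact_conv_sym n a b - ffact_conv_main n a b\<bar> \<le> c * K powi (int n - 2)"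
    using ffact_conv_sym_expansion unfolding poly_bounded_def by blast
  show thesis
  proof (rule that[of "c + 2 * real (n choose 2)"])
    fix K \<delta> a b :: real
    assume K: "1 \<le> K" "\<bar>\<delta>\<bar> \<le> 1" "\<bar>a\<bar> \<le> K" "\<bar>b\<bar> \<le> K" "a - b = \<delta> * K" "a + b = K - 2"
    have "\<bar>ffact_conv_sym n a b - main_term (Suc n) \<delta> K\<bar>
        \<le> \<bar>ffact_conv_sym n a b - ffact_conv_main n a b\<bar> + \<bar>ffact_conv_main n a b - main_term (Suc n) \<delta> K\<bar>"
      by arith
    also have "\<dots> \<le> c * K powi (int n - 2) + 2 * real (n choose 2) * K powi (int n - 2)"
      using c[of K a b] ffact_conv_main_approx[of a b \<delta> K n] K by (intro add_mono) auto
    finally show "\<bar>ffact_conv_sym n a b - main_term (Suc n) \<delta> K\<bar> \<le> (c + 2 * real (n choose 2)) * K powi (int n - 2)"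
      by (simp add: distrib_right)
  qed
qed

section \<open>Fourier coefficients of the weighted majority\<close>

lemma wmaj_eq_sgn:
  assumes "\<delta> * real k = real u - real v"
  shows "wmaj k \<delta> x = sgn ((real u - real v) * x 1 + (\<Sum>i\<in>{2..k}. x i))"
  unfolding wmaj_def assms[symmetric] by (simp add: mult.assoc)

lemma sum_cube_wmaj_monomial:
  assumes uv: "u + v = k" and u: "1 \<le> u" and v: "1 \<le> v"
    and I: "I \<subseteq> {2..k}" "card I = Suc n"
  shows "(\<Sum>x\<in>cube k. sgn ((real u - real v) * x 1 + (\<Sum>i\<in>{2..k}. x i)) * x 1 ^ j * (\<Prod>i\<in>I. x i))
    = 2 * (-1) ^ n * (fact (k - n - 2) / (fact (u - 1) * fact (v - 1)))
      * (ffact_conv n (real (u - 1)) (real (v - 1)) + (-1) ^ j * ffact_conv n (real (v - 1)) (real (u - 1)))"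
proof -
  define N where "N = k - n - 2"
  have "card I \<le> card {2..k}" using I by (intro card_mono) auto
  then have N: "card ({2..k} - I) = N" and Nuv: "N + n + 2 = u + v"
    using I uv by (auto simp: N_def card_Diff_subset finite_subset)
  have k: "1 \<le> k" using u uv by simp
  define H where "H e \<alpha> \<beta> = e ^ j * sgn ((real u - real v) * e + \<alpha> + \<beta>)" for e \<alpha> \<beta> :: real
  define DS where "DS c = (\<Sum>p=0..Suc n. \<Sum>q=0..N. real (Suc n choose p) * real (N choose q) * (-1) ^ (Suc n - p) *
           sgn (c + (2 * real p - real (Suc n)) + (2 * real q - real N)))" for c
  have "(\<Sum>x\<in>cube k. sgn ((real u - real v) * x 1 + (\<Sum>i\<in>{2..k}. x i)) * x 1 ^ j * (\<Prod>i\<in>I. x i))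
      = (\<Sum>x\<in>cube k. H (x 1) (\<Sum>i\<in>I. x i) (\<Sum>i\<in>{2..k} - I. x i) * (\<Prod>i\<in>I. x i))"
    unfolding H_def sum.subset_diff[OF I(1) finite_atLeastAtMost] by (simp add: add_ac mult_ac)
  also have "\<dots> = DS (real u - real v) + (-1) ^ j * DS (real v - real u)"
    unfolding sum_cube_by_counts[OF k I N] unfolding DS_def H_def sum_distrib_left sum.distrib[symmetric]
    using u uv by (intro sum.cong refl) (auto simp: algebra_simps)
  also have "\<dots> = 2 * (-1) ^ n * (fact N / (fact (u - 1) * fact (v - 1)))
      * (ffact_conv n (real (u - 1)) (real (v - 1)) + (-1) ^ j * ffact_conv n (real (v - 1)) (real (u - 1)))"
    unfolding DS_def alternating_double_sum_sgn_ffact[OF Nuv u v]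
      alternating_double_sum_sgn_ffact[OF Nuv[unfolded add.commute[of u]] v u] by (simp add: algebra_simps)
  finally show ?thesis unfolding N_def .
qed

lemma two_power_eq_four_mult:
  assumes "2 \<le> k"
  shows "(2::real) ^ k = 4 * 2 ^ (k - 2)"
proof -
  obtain m where "k = Suc (Suc m)" using assms by (metis add_2_eq_Suc le_Suc_ex)
  then show ?thesis by simp
qed

lemma fourier_coeff_wmaj_odd_degree:
  assumes uv: "u + v = k" "1 \<le> u" "1 \<le> v" and \<delta>: "\<delta> * real k = real u - real v"
    and I: "I \<subseteq> {2..k}" "card I = Suc n" and n: "even n"
  shows "fourier_coeff k (wmaj k \<delta>) I
    = 1 / 2 ^ (k - 2) * (fact (k - n - 2) / (fact (u - 1) * fact (v - 1)))
      * ffact_conv_sym n (real (u - 1)) (real (v - 1))"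
proof -
  have "(2::real) ^ k = 4 * 2 ^ (k - 2)"
    using uv by (intro two_power_eq_four_mult) simp
  then show ?thesis
    using sum_cube_wmaj_monomial[OF uv I, of 0] n
    unfolding fourier_coeff_def wmaj_eq_sgn[OF \<delta>] ffact_conv_sym_def by simp
qed

lemma fourier_coeff_wmaj_even_degree:
  assumes uv: "u + v = k" "1 \<le> u" "1 \<le> v" and \<delta>: "\<delta> * real k = real u - real v"
    and I: "I \<subseteq> {2..k}" "card I = Suc n" and n: "odd n"
  shows "fourier_coeff k (wmaj k \<delta>) (insert 1 I)
    = - (1 / 2 ^ (k - 2)) * (fact (k - n - 2) / (fact (u - 1) * fact (v - 1)))
      * ffact_conv_sym n (real (u - 1)) (real (v - 1))"
proof -
  have "(2::real) ^ k = 4 * 2 ^ (k - 2)"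
    using uv by (intro two_power_eq_four_mult) simp
  moreover have "(\<Prod>i\<in>insert 1 I. x i) = x 1 ^ 1 * (\<Prod>i\<in>I. x i)" for x :: "nat \<Rightarrow> real"
    using I by (subst prod.insert) (auto intro: finite_subset)
  ultimately show ?thesis
    using sum_cube_wmaj_monomial[OF uv I, of 1] n
    unfolding fourier_coeff_def wmaj_eq_sgn[OF \<delta>] ffact_conv_sym_def by (simp add: mult.assoc)
qed

lemma sum_binomial_upper_tail:
  assumes "u + v = Suc m"
  shows "(\<Sum>q=0..m. real (m choose q) * (if u \<le> q then 1 else 0)) = (\<Sum>l<v. real (m choose l))"
proof -
  have "(\<Sum>q=0..m. real (m choose q) * (if u \<le> q then 1 else 0))
      = (\<Sum>q=0..m. real (m choose (m + 0 - q)) * (if u \<le> m + 0 - q then 1 else 0))"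
    by (rule sum.atLeastAtMost_rev)
  also have "\<dots> = (\<Sum>q=0..m. if q < v then real (m choose q) else 0)"
  proof (rule sum.cong[OF refl])
    fix q assume "q \<in> {0..m}"
    then have "m choose (m - q) = m choose q" and "(u \<le> m - q) = (q < v)"
      using assms by (auto simp flip: binomial_symmetric)
    then show "real (m choose (m + 0 - q)) * (if u \<le> m + 0 - q then 1 else 0) = (if q < v then real (m choose q) else 0)"
      by simp
  qed
  also have "\<dots> = (\<Sum>l<v. real (m choose l))"
    using assms by (simp add: sum.If_cases) (intro sum.cong, auto)
  finally show ?thesis .
qed

lemma fourier_coeff_wmaj_first:
  assumes uv: "u + v = k" and v: "1 \<le> v" "v \<le> u" and \<delta>: "\<delta> * real k = real u - real v"
  shows "fourier_coeff k (wmaj k \<delta>) {1} = 1 - 1 / 2 ^ (k - 2) * (\<Sum>l = 0..<v. real (k - 1 choose l))"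
proof -
  have k: "2 \<le> k" and km: "u + v = Suc (k - 1)" using uv v by auto
  define S where "S = (\<Sum>l<v. real (k - 1 choose l))"
  define H where "H e \<alpha> \<beta> = e * sgn ((real u - real v) * e + \<alpha> + \<beta>)" for e \<alpha> \<beta> :: real
  from k have "(\<Sum>x\<in>cube k. H (x 1) (\<Sum>i\<in>{}. x i) (\<Sum>i\<in>{2..k} - {}. x i) * (\<Prod>i\<in>{}. x i))
      = (\<Sum>p=0..0. \<Sum>q=0..k - 1. real (0 choose p) * real (k - 1 choose q) * (-1) ^ (0 - p) *
       (H 1 (2 * real p - real 0) (2 * real q - real (k - 1)) + H (-1) (2 * real p - real 0) (2 * real q - real (k - 1))))"
    by (intro sum_cube_by_counts) auto
  then have "(\<Sum>x\<in>cube k. wmaj k \<delta> x * (\<Prod>i\<in>{1}. x i))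
      = (\<Sum>q=0..k - 1. real (k - 1 choose q) * (H 1 0 (2 * real q - real (k - 1)) + H (-1) 0 (2 * real q - real (k - 1))))"
    unfolding wmaj_eq_sgn[OF \<delta>] H_def by (simp add: mult_ac)
  also have "\<dots> = (\<Sum>q=0..k - 1. real (k - 1 choose q) * (2 - 2 * (if q < v then 1 else 0) - 2 * (if u \<le> q then 1 else 0)))"
  proof (rule sum.cong[OF refl])
    fix q
    have "(real u - real v) * 1 + 0 + (2 * real q - real (k - 1)) = 2 * real_of_int (int q - int v) + 1"
      and "(real u - real v) * (-1) + 0 + (2 * real q - real (k - 1)) = 2 * real_of_int (int q - int u) + 1"
      using uv k by simp_all
    then show "real (k - 1 choose q) * (H 1 0 (2 * real q - real (k - 1)) + H (-1) 0 (2 * real q - real (k - 1)))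
      = real (k - 1 choose q) * (2 - 2 * (if q < v then 1 else 0) - 2 * (if u \<le> q then 1 else 0))"
      unfolding H_def using v by (simp only: sgn_odd_int) auto
  qed
  also have "\<dots> = 2 * (\<Sum>q=0..k - 1. real (k - 1 choose q))
      - 2 * (\<Sum>q=0..k - 1. real (k - 1 choose q) * (if q < v then 1 else 0))
      - 2 * (\<Sum>q=0..k - 1. real (k - 1 choose q) * (if u \<le> q then 1 else 0))"
    by (simp add: sum_subtractf sum_distrib_left sum.distrib algebra_simps)
  also have "(\<Sum>q=0..k - 1. real (k - 1 choose q) * (if u \<le> q then 1 else 0)) = S"
    unfolding S_def by (rule sum_binomial_upper_tail[OF km])
  also have "(\<Sum>q=0..k - 1. real (k - 1 choose q) * (if q < v then 1 else 0))
      = (\<Sum>q=0..k - 1. if q < v then real (k - 1 choose q) else 0)"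
    by (intro sum.cong) auto
  also have "\<dots> = S"
    unfolding S_def using km by (simp add: sum.If_cases) (intro sum.cong, auto)
  also have "(\<Sum>q=0..k - 1. real (k - 1 choose q)) = 2 ^ (k - 1)"
    using choose_row_sum[of "k - 1"] by (simp add: atLeast0AtMost flip: of_nat_sum)
  also have "2 * 2 ^ (k - 1) = (2::real) ^ k" using k by (cases k) auto
  finally have "(\<Sum>x\<in>cube k. wmaj k \<delta> x * (\<Prod>i\<in>{1}. x i)) = 2 ^ k - 4 * S"
    by simp
  then show ?thesis
    unfolding fourier_coeff_def S_def two_power_eq_four_mult[OF k] atLeast0LessThan
    by (simp add: field_simps)
qed

lemma wmaj_parameters:
  assumes \<delta>: "0 < \<delta>" "\<delta> < 1" and k: "1 \<le> k"
    and u: "real u = (1 + \<delta>) / 2 * real k" and v: "real v = (1 - \<delta>) / 2 * real k"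
  shows "u + v = k" "1 \<le> u" "1 \<le> v" "v \<le> u" "\<delta> * real k = real u - real v"
proof -
  have sum: "real u + real v = real k" and diff: "real u - real v = \<delta> * real k"
    using u v by (simp_all add: field_simps)
  have "0 < real u" "0 < real v" "0 < \<delta> * real k"
    unfolding u v using \<delta> k by simp_all
  then show "1 \<le> u" "1 \<le> v" "v \<le> u" using diff by simp_all
  show "u + v = k" using sum by (simp flip: of_nat_add)
  show "\<delta> * real k = real u - real v" using diff by simp
qed

theorem lemma4p2:
  fixes \<delta>\<^sub>0 :: real
  assumes "\<delta>\<^sub>0 > 0"
  shows "\<forall>t::nat. t \<ge> 1 \<longrightarrow> (\<exists>C::real. \<forall>(k::nat) (\<delta>::real) (u::nat) (v::nat).
    k \<ge> t + 1 \<and> \<delta>\<^sub>0 \<le> \<delta> \<and> \<delta> < 1 \<and> (\<exists>m::int. \<delta> * real k + real k - 1 = 2 * real_of_int m + 1)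
    \<and> real u = (1 + \<delta>) / 2 * real k \<and> real v = (1 - \<delta>) / 2 * real k \<longrightarrow>
      fourier_coeff k (wmaj k \<delta>) {1}
        = 1 - (1 / 2 ^ (k - 2)) * (\<Sum>l = 0..<v. real (Binomial.binomial (k - 1) l))
    \<and> (odd t \<longrightarrow> (\<forall>I. I \<subseteq> {2..k} \<and> card I = t \<longrightarrow>
        (\<exists>R. \<bar>R\<bar> \<le> C * real k powi (int t - 3) \<and>
          fourier_coeff k (wmaj k \<delta>) I
          = (1 / 2 ^ (k - 2)) * (fact (k - t - 1) / (fact (u - 1) * fact (v - 1)))
            * (\<delta> ^ (t - 1) * real k ^ (t - 1)
               - (real t - 1) * (real t - 2) / 2 * \<delta> powi (int t - 3) * real k powi (int t - 2) + R))))
    \<and> (even t \<longrightarrow> (\<forall>J. J \<subseteq> {2..k} \<and> card J = t \<longrightarrow>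
        (\<exists>R. \<bar>R\<bar> \<le> C * real k powi (int t - 3) \<and>
          fourier_coeff k (wmaj k \<delta>) (insert 1 J)
          = - (1 / 2 ^ (k - 2)) * (fact (k - t - 1) / (fact (u - 1) * fact (v - 1)))
            * (\<delta> ^ (t - 1) * real k ^ (t - 1)
               - (real t - 1) * (real t - 2) / 2 * \<delta> powi (int t - 3) * real k powi (int t - 2) + R)))))"
  apply (intro allI impI)
  subgoal premises t for t
  proof -
    obtain n where n: "t = Suc n" using t by (cases t) auto
    obtain C where C: "\<And>K \<delta> a b. 1 \<le> K \<Longrightarrow> \<bar>\<delta>\<bar> \<le> 1 \<Longrightarrow> \<bar>a\<bar> \<le> K \<Longrightarrow> \<bar>b\<bar> \<le> K \<Longrightarrow>
        a - b = \<delta> * K \<Longrightarrow> a + b = K - 2 \<Longrightarrow>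
        \<bar>ffact_conv_sym n a b - main_term (Suc n) \<delta> K\<bar> \<le> C * K powi (int n - 2)"
      using ffact_conv_sym_remainder[where n = n] by blast
    show ?thesis
      apply (intro exI[of _ C] allI impI)
      subgoal premises H for k \<delta> u v
      proof -
        have "0 < \<delta>" "\<delta> < 1" "1 \<le> k" "real u = (1 + \<delta>) / 2 * real k" "real v = (1 - \<delta>) / 2 * real k"
          using H assms by auto
        note uv = wmaj_parameters[OF this]
        let ?R = "ffact_conv_sym n (real (u - 1)) (real (v - 1)) - main_term (Suc n) \<delta> (real k)"
        have "\<bar>?R\<bar> \<le> C * real k powi (int t - 3)"
          using C[of "real k" \<delta> "real (u - 1)" "real (v - 1)"] uv \<open>0 < \<delta>\<close> \<open>\<delta> < 1\<close> unfolding n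
          by simp
        then show ?thesis
          using fourier_coeff_wmaj_first[OF uv(1,3,4,5)]
            fourier_coeff_wmaj_odd_degree[OF uv(1,2,3,5)] fourier_coeff_wmaj_even_degree[OF uv(1,2,3,5)]
          unfolding n by (auto intro!: exI[of _ ?R] simp: main_term_def)
      qed
      done
  qed
  done

end
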